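(* For every integer $n\ge2$ and every $m\in\{1,2,\dots,n-1\}$, the coefficient of $u^{m}v^{n+1-m}w^{n-1}$ in $P_{n/(n+1)}(u,v,w)$ (i.e. the coefficient at the lattice point $(m,n+1-m)$ of the Newton polygon) equals $4m$.
   Context: Markov polynomials. Let $x,y,z$ be indeterminates. Consider the set consisting of all rationals $\rho\in[0,1]$, each written in lowest terms $\rho=a/b$ with integers $a\ge 0$, $b\ge 1$, together with the formal symbol $1/0$. Define Laurent polynomials $M_\rho(x,y,z)$ recursively by $M_{1/0}=y$, $M_{0/1}=x$, $M_{1/1}=\frac{x^2+y^2}{z}$, and: whenever $a/b$, $c/d$ are in this set with $|ad-bc|=1$ and $(a+2c)/(b+2d)\in[0,1]$, then $M_{\frac{a+2c}{b+2d}}=\big(M_{c/d}^2+M_{\frac{a+c}{b+d}}^2\big)/M_{a/b}$. This determines $M_\rho$ for every rational $\rho\in[0,1]$. Numerator. For coprime $1\le a\le b$, $P_{a/b}(u,v,w)$ denotes the homogeneous polynomial of degree $a+b-1$ such that $M_{a/b}(x,y,z)=P_{a/b}(x^2,y^2,z^2)/(x^{a-1}y^{b-1}z^{a+b-1})$; its existence is known. *)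

theory Defs
  imports "HOL-Computational_Algebra.Polynomial" "HOL-Computational_Algebra.Fraction_Field"
begin

text \<open>Polynomials in three variables u,v,w with integer coefficients, as nested
univariate polynomials: innermost variable u, middle v, outermost w.
The coefficient of u^i v^j w^k of P is coeff3 P i j k.\<close>

type_synonym poly3 = "int poly poly poly"

text \<open>The field of rational functions in x,y,z (fraction field of poly3);
x is the innermost, y the middle, z the outermost variable.\<close>

type_synonym ratfun3 = "poly3 fract"

definition varx :: ratfun3 where "varx = Fract [:[:[:0, 1:]:]:] 1"
definition vary :: ratfun3 where "vary = Fract [:[:0, 1:]:] 1"
definition varz :: ratfun3 where "varz = Fract [:0, 1:] 1"

definition coeff3 :: "poly3 \<Rightarrow> nat \<Rightarrow> nat \<Rightarrow> nat \<Rightarrow> int" where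
  "coeff3 P i j k = coeff (coeff (coeff P k) j) i"

definition eval3 :: "poly3 \<Rightarrow> ratfun3 \<Rightarrow> ratfun3 \<Rightarrow> ratfun3 \<Rightarrow> ratfun3" where
  "eval3 P a b c =
     poly (map_poly (\<lambda>q. poly (map_poly (\<lambda>r. poly (map_poly of_int r) a) q) b) P) c"

definition homogeneous3 :: "nat \<Rightarrow> poly3 \<Rightarrow> bool" where
  "homogeneous3 d P \<longleftrightarrow> (\<forall>i j k. coeff3 P i j k \<noteq> 0 \<longrightarrow> i + j + k = d)"

text \<open>The Markov Laurent polynomials, following the recursive definition: a fraction
a/b (in lowest terms, 1/0 the formal symbol) is represented by the pair (a,b);
markov_rel (a,b) M means M is (a value of) M_{a/b}.\<close>

inductive markov_rel :: "nat \<times> nat \<Rightarrow> ratfun3 \<Rightarrow> bool" where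
  inf: "markov_rel (1, 0) vary"
| zero: "markov_rel (0, 1) varx"
| one: "markov_rel (1, 1) ((varx ^ 2 + vary ^ 2) / varz)"
| step: "\<lbrakk> markov_rel (a, b) A; markov_rel (c, d) C; markov_rel (a + c, b + d) B;
          \<bar>int a * int d - int b * int c\<bar> = 1;
          (of_nat (a + 2 * c) / of_nat (b + 2 * d) :: rat) \<in> {0..1} \<rbrakk>
         \<Longrightarrow> markov_rel (a + 2 * c, b + 2 * d) ((C ^ 2 + B ^ 2) / A)"

definition markov_M :: "nat \<Rightarrow> nat \<Rightarrow> ratfun3" where
  "markov_M a b = (THE M. markov_rel (a, b) M)"

definition markov_P :: "nat \<Rightarrow> nat \<Rightarrow> poly3" where
  "markov_P a b = (THE P. homogeneous3 (a + b - 1) P \<and>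
      markov_M a b = eval3 P (varx ^ 2) (vary ^ 2) (varz ^ 2)
                     / (varx ^ (a - 1) * vary ^ (b - 1) * varz ^ (a + b - 1)))"

end

theory Submission
  imports Defs
begin

(* Every step of the recursion producing k/(k+1) with k >= 2 starts from a/b = (k-2)/(k-1) and
   c/d = 1/1, so M_k := M_{k/(k+1)} satisfies M_{k+2} M_k = M_{1/1}^2 + M_{k+1}^2.  Such a relation
   is the conserved determinant of a linear recurrence g_{k+2} = T g_{k+1} - g_k; with
   T = (x^2+y^2)(z^2+x^2+y^2)/(x y z^2) the solution with the right initial values is
   x P_k(x^2,y^2,z^2)/(x y z^2)^k, where P_{k+2} = (u+v)(w+u+v) P_{k+1} - u v w^2 P_k.  Hence
   P_{k/(k+1)} = P_k.  As a polynomial in w, P_k has leading coefficient u^k and next coefficient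
   (u+v)^2 Q_k with Q_k = sum_{i<k} (i+1) u^i v^(k-1-i), so the coefficient of u^m v^(n+1-m) w^(n-1)
   is (m-1) + 2m + (m+1) = 4m. *)

locale comm_ring_hom =
  fixes hom :: "'a::comm_ring_1 \<Rightarrow> 'b::comm_ring_1"
  assumes hom_add [simp]: "hom (x + y) = hom x + hom y"
    and hom_mult [simp]: "hom (x * y) = hom x * hom y"
    and hom_one [simp]: "hom 1 = 1"
begin

lemma hom_zero [simp]: "hom 0 = 0"
  using hom_add[of 0 0] by simp

lemma hom_uminus [simp]: "hom (- x) = - hom x"
  using hom_add[of x "- x"] by (simp add: eq_neg_iff_add_eq_0 add.commute)

lemma hom_diff [simp]: "hom (x - y) = hom x - hom y"
  using hom_add[of x "- y"] by simp

lemma hom_power [simp]: "hom (x ^ n) = hom x ^ n"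
  by (induction n) simp_all

lemma hom_of_int [simp]: "hom (of_int i) = of_int i"
proof -
  have "hom (of_nat n) = of_nat n" for n
    by (induction n) simp_all
  then show ?thesis
    by (cases i) simp_all
qed

lemma comm_ring_hom_map_poly: "comm_ring_hom (map_poly hom)"
proof
  show "map_poly hom (p + q) = map_poly hom p + map_poly hom q" for p q
    by (intro poly_eqI) (simp add: coeff_map_poly)
  show "map_poly hom (p * q) = map_poly hom p * map_poly hom q" for p q
  proof (induction p)
    case (pCons a p)
    have "map_poly hom (pCons a p * q) = map_poly hom (smult a q) + map_poly hom (pCons 0 (p * q))"
      by (intro poly_eqI) (simp add: coeff_map_poly)
    then show ?case
      by (simp add: map_poly_smult map_poly_pCons pCons.IH)
  qed simp
qed simp

lemma hom_poly: "hom (poly p x) = poly (map_poly hom p) (hom x)"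
  by (induction p) (simp_all add: map_poly_pCons)

lemma hom_poly_map_poly:
  assumes "f 0 = 0"
  shows "hom (poly (map_poly f p) x) = poly (map_poly (hom \<circ> f) p) (hom x)"
  by (simp add: hom_poly map_poly_map_poly assms)

end

lemma comm_ring_hom_poly: "comm_ring_hom (\<lambda>p. poly p x)"
  by unfold_locales simp_all

lemma comm_ring_hom_comp:
  "comm_ring_hom f \<Longrightarrow> comm_ring_hom g \<Longrightarrow> comm_ring_hom (f \<circ> g)"
  by (simp add: comm_ring_hom_def)

lemma comm_ring_hom_of_int: "comm_ring_hom of_int"
  by unfold_locales simp_all

lemma comm_ring_hom_const_poly: "comm_ring_hom (\<lambda>x. [:x:])"
  by unfold_locales (simp_all add: one_pCons)

lemma comm_ring_hom_Fract: "comm_ring_hom (\<lambda>x::'a::idom. Fract x 1)"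
  by unfold_locales (simp_all add: One_fract_def)

definition subst3 :: "poly3 \<Rightarrow> 'a \<Rightarrow> 'a \<Rightarrow> 'a \<Rightarrow> 'a::comm_ring_1" where
  "subst3 P a b c = poly (map_poly (\<lambda>q. poly (map_poly (\<lambda>r. poly (map_poly of_int r) a) q) b) P) c"

lemma eval3_eq_subst3: "eval3 = subst3"
  by (simp add: fun_eq_iff eval3_def subst3_def)

lemma comm_ring_hom_poly_map_poly:
  "comm_ring_hom f \<Longrightarrow> comm_ring_hom (\<lambda>p. poly (map_poly f p) x)"
  using comm_ring_hom_comp[OF comm_ring_hom_poly comm_ring_hom.comm_ring_hom_map_poly]
  by (simp add: comp_def)

lemma comm_ring_hom_subst3: "comm_ring_hom (\<lambda>P. subst3 P a b c)"
  unfolding subst3_def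
  by (intro comm_ring_hom_poly_map_poly comm_ring_hom_of_int)

lemma (in comm_ring_hom) hom_subst3: "hom (subst3 P a b c) = subst3 P (hom a) (hom b) (hom c)"
proof -
  have "hom \<circ> of_int = of_int"
    by (simp add: fun_eq_iff)
  then have "hom \<circ> (\<lambda>r. poly (map_poly of_int r) a) = (\<lambda>r. poly (map_poly of_int r) (hom a))"
    by (intro ext) (simp add: hom_poly_map_poly)
  then have "hom \<circ> (\<lambda>q. poly (map_poly (\<lambda>r. poly (map_poly of_int r) a) q) b) =
      (\<lambda>q. poly (map_poly (\<lambda>r. poly (map_poly of_int r) (hom a)) q) (hom b))"
    by (intro ext) (simp add: hom_poly_map_poly)
  then show ?thesis
    by (simp add: subst3_def hom_poly_map_poly)
qed

definition var_u :: poly3 where "var_u = [:[:[:0, 1:]:]:]"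
definition var_v :: poly3 where "var_v = [:[:0, 1:]:]"
definition var_w :: poly3 where "var_w = [:0, 1:]"

lemma subst3_vars [simp]:
  "subst3 var_u a b c = a" "subst3 var_v a b c = b" "subst3 var_w a b c = c"
  by (simp_all add: subst3_def var_u_def var_v_def var_w_def map_poly_pCons)

(* Evaluating at the squares x^2, y^2, z^2 substitutes u^2, v^2, w^2 for the variables; this
   substitution is injective, which makes the numerator P_{a/b} unique. *)
definition sq_subst :: "('a::zero \<Rightarrow> 'b::comm_ring_1) \<Rightarrow> 'a poly \<Rightarrow> 'b poly" where
  "sq_subst f p = map_poly f p \<circ>\<^sub>p [:0, 0, 1:]"

lemma sq_subst_0 [simp]: "sq_subst f 0 = 0"
  by (simp add: sq_subst_def)

lemma poly_map_poly_const_sq: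
  "f 0 = 0 \<Longrightarrow> poly (map_poly (\<lambda>x. [:f x:]) p) [:0, 0, 1:] = sq_subst f p"
  by (simp add: sq_subst_def pcompose_altdef map_poly_map_poly comp_def)

lemma inj_sq_subst:
  fixes f :: "'a::zero \<Rightarrow> 'b::idom"
  assumes "inj f" "f 0 = 0"
  shows "inj (sq_subst f)"
proof (rule injI)
  fix p q assume "sq_subst f p = sq_subst f q"
  then have "(map_poly f p - map_poly f q) \<circ>\<^sub>p [:0, 0, 1:] = 0"
    by (simp add: sq_subst_def pcompose_diff)
  then have "map_poly f p = map_poly f q"
    by (simp add: pcompose_eq_0_iff)
  then show "p = q"
    by (metis assms coeff_map_poly poly_eqI inj_eq)
qed

abbreviation sq3 :: "poly3 \<Rightarrow> poly3" where
  "sq3 \<equiv> sq_subst (sq_subst (sq_subst (\<lambda>i. i)))"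

lemma subst3_squares: "subst3 P (var_u\<^sup>2) (var_v\<^sup>2) (var_w\<^sup>2) = sq3 P"
proof -
  have const2: "comm_ring_hom (\<lambda>t. [:[:t:]:])"
    using comm_ring_hom_comp[OF comm_ring_hom_const_poly comm_ring_hom_const_poly]
    by (simp add: comp_def)
  have "(of_int :: int \<Rightarrow> poly3) = (\<lambda>i. [:[:[:i:]:]:])"
    by (simp add: fun_eq_iff of_int_poly)
  then have "poly (map_poly of_int r) (var_u\<^sup>2) = [:[:sq_subst (\<lambda>i. i) r:]:]" for r :: "int poly"
    using comm_ring_hom.hom_poly_map_poly[OF const2, of "\<lambda>i. [:i:]" r "[:0, 0, 1:]"]
    by (simp add: var_u_def power2_eq_square comp_def poly_map_poly_const_sq)
  then have "poly (map_poly (\<lambda>r. poly (map_poly of_int r) (var_u\<^sup>2)) q) (var_v\<^sup>2) =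
      [:sq_subst (sq_subst (\<lambda>i. i)) q:]" for q :: "int poly poly"
    using comm_ring_hom.hom_poly_map_poly[OF comm_ring_hom_const_poly,
        of "\<lambda>r. [:sq_subst (\<lambda>i. i) r:]" q "[:0, 0, 1:]"]
    by (simp add: var_v_def power2_eq_square comp_def poly_map_poly_const_sq)
  then show ?thesis
    by (simp add: subst3_def var_w_def power2_eq_square poly_map_poly_const_sq)
qed

lemma inj_sq3: "inj sq3"
  by (intro inj_sq_subst) (simp_all add: sq_subst_def inj_on_def)

lemma comm_ring_hom_eval3: "comm_ring_hom (\<lambda>P. eval3 P a b c)"
  unfolding eval3_eq_subst3 by (rule comm_ring_hom_subst3)

lemma eval3_vars [simp]:
  "eval3 var_u a b c = a" "eval3 var_v a b c = b" "eval3 var_w a b c = c"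
  by (simp_all add: eval3_eq_subst3)

lemma eval3_squares: "eval3 P (varx\<^sup>2) (vary\<^sup>2) (varz\<^sup>2) = Fract (sq3 P) 1"
proof -
  interpret to_fract: comm_ring_hom "\<lambda>t::poly3. Fract t 1"
    by (rule comm_ring_hom_Fract)
  have "varx = Fract var_u 1" "vary = Fract var_v 1" "varz = Fract var_w 1"
    by (simp_all add: varx_def vary_def varz_def var_u_def var_v_def var_w_def)
  then show ?thesis
    using to_fract.hom_subst3[of P "var_u\<^sup>2" "var_v\<^sup>2" "var_w\<^sup>2"]
    by (simp add: eval3_eq_subst3 subst3_squares)
qed

lemma eval3_squares_inj:
  assumes "eval3 P (varx\<^sup>2) (vary\<^sup>2) (varz\<^sup>2) = eval3 Q (varx\<^sup>2) (vary\<^sup>2) (varz\<^sup>2)"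
  shows "P = Q"
  using assms inj_sq3 by (simp add: eval3_squares eq_fract inj_eq)

lemma vars_nonzero: "varx \<noteq> 0" "vary \<noteq> 0" "varz \<noteq> 0"
  by (simp_all add: varx_def vary_def varz_def Zero_fract_def eq_fract)

lemma coeff3_add [simp]: "coeff3 (P + Q) i j k = coeff3 P i j k + coeff3 Q i j k"
  by (simp add: coeff3_def)

lemma coeff3_diff [simp]: "coeff3 (P - Q) i j k = coeff3 P i j k - coeff3 Q i j k"
  by (simp add: coeff3_def)

lemma coeff3_mult:
  "coeff3 (P * Q) i j k =
     (\<Sum>a\<le>k. \<Sum>b\<le>j. \<Sum>c\<le>i. coeff3 P c b a * coeff3 Q (i - c) (j - b) (k - a))"
  by (simp add: coeff3_def coeff_mult coeff_sum)

lemma homogeneous3_mult: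
  assumes "homogeneous3 d P" "homogeneous3 e Q"
  shows "homogeneous3 (d + e) (P * Q)"
  unfolding homogeneous3_def
proof (intro allI impI)
  fix i j k
  assume "coeff3 (P * Q) i j k \<noteq> 0"
  then obtain a b c where "a \<le> k" "b \<le> j" "c \<le> i"
    and "coeff3 P c b a \<noteq> 0" "coeff3 Q (i - c) (j - b) (k - a) \<noteq> 0"
    unfolding coeff3_mult by (auto elim!: sum.not_neutral_contains_not_neutral)
  with assms show "i + j + k = d + e"
    unfolding homogeneous3_def by fastforce
qed

lemma homogeneous3_add:
  "homogeneous3 d P \<Longrightarrow> homogeneous3 d Q \<Longrightarrow> homogeneous3 d (P + Q)"
  unfolding homogeneous3_def by (metis add.right_neutral coeff3_add)

lemma homogeneous3_diff:
  "homogeneous3 d P \<Longrightarrow> homogeneous3 d Q \<Longrightarrow> homogeneous3 d (P - Q)"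
  unfolding homogeneous3_def by (metis diff_zero coeff3_diff)

lemma homogeneous3_one: "homogeneous3 0 1"
  by (simp add: homogeneous3_def coeff3_def coeff_1)

lemma homogeneous3_vars: "homogeneous3 1 var_u" "homogeneous3 1 var_v" "homogeneous3 1 var_w"
  by (auto simp: homogeneous3_def coeff3_def var_u_def var_v_def var_w_def coeff_pCons
      split: nat.splits)

fun markov_P_seq :: "nat \<Rightarrow> poly3" where
  "markov_P_seq 0 = 1"
| "markov_P_seq (Suc 0) = var_u * var_w + (var_u + var_v)\<^sup>2"
| "markov_P_seq (Suc (Suc k)) =
     (var_u + var_v) * (var_w + var_u + var_v) * markov_P_seq (Suc k)
     - var_u * var_v * var_w\<^sup>2 * markov_P_seq k"

declare markov_P_seq.simps(3) [simp del]

lemma homogeneous3_markov_P_seq: "homogeneous3 (2 * k) (markov_P_seq k)"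
proof (induction k rule: markov_P_seq.induct)
  case 1
  show ?case by (simp add: homogeneous3_one)
next
  case 2
  have "homogeneous3 1 (var_u + var_v)"
    by (intro homogeneous3_add homogeneous3_vars)
  then have "homogeneous3 (1 + 1) (var_u * var_w + (var_u + var_v) * (var_u + var_v))"
    by (intro homogeneous3_add homogeneous3_mult homogeneous3_vars)
  then show ?case
    by (simp add: power2_eq_square numeral_2_eq_2)
next
  case (3 k)
  have "homogeneous3 1 (var_u + var_v)" "homogeneous3 1 (var_w + var_u + var_v)"
    by (intro homogeneous3_add homogeneous3_vars)+
  then have "homogeneous3 (1 + 1 + 2 * Suc k)
      ((var_u + var_v) * (var_w + var_u + var_v) * markov_P_seq (Suc k))"
    by (intro homogeneous3_mult 3)
  moreover have "homogeneous3 (1 + 1 + (1 + 1) + 2 * k)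
      (var_u * var_v * (var_w * var_w) * markov_P_seq k)"
    by (intro homogeneous3_mult homogeneous3_vars 3)
  ultimately show ?case
    by (simp add: markov_P_seq.simps(3) homogeneous3_diff power2_eq_square)
qed

(* P_k is read as a polynomial in w over Z[u,v]; bivar_u and bivar_v are u and v in that ring. *)
definition bivar_u :: "int poly poly" where "bivar_u = [:[:0, 1:]:]"
definition bivar_v :: "int poly poly" where "bivar_v = [:0, 1:]"

lemma coeff_markov_P_seq_Suc_Suc:
  "coeff (markov_P_seq (Suc (Suc k))) j =
     (bivar_u + bivar_v)\<^sup>2 * coeff (markov_P_seq (Suc k)) j
     + (if j = 0 then 0 else (bivar_u + bivar_v) * coeff (markov_P_seq (Suc k)) (j - 1))
     - (if j < 2 then 0 else bivar_u * bivar_v * coeff (markov_P_seq k) (j - 2))"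
proof -
  have "markov_P_seq (Suc (Suc k)) =
      smult ((bivar_u + bivar_v)\<^sup>2) (markov_P_seq (Suc k))
      + pCons 0 (smult (bivar_u + bivar_v) (markov_P_seq (Suc k)))
      - pCons 0 (pCons 0 (smult (bivar_u * bivar_v) (markov_P_seq k)))"
    by (simp add: markov_P_seq.simps(3) var_u_def var_v_def var_w_def bivar_u_def bivar_v_def
        power2_eq_square algebra_simps)
  then show ?thesis
    by (cases j; cases "j - 1") (auto simp: coeff_pCons)
qed

lemma markov_P_seq_leading:
  "(\<forall>j>k. coeff (markov_P_seq k) j = 0) \<and> coeff (markov_P_seq k) k = bivar_u ^ k"
proof (induction k rule: markov_P_seq.induct)
  case 1
  show ?case by (simp add: coeff_1)
next
  case 2
  show ?case
    by (auto simp: var_u_def var_v_def var_w_def bivar_u_def power2_eq_square coeff_pCons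
        split: nat.splits)
next
  case (3 k)
  have "coeff (markov_P_seq (Suc (Suc k))) j = 0" if "j > Suc (Suc k)" for j
    using 3 that by (simp add: coeff_markov_P_seq_Suc_Suc)
  moreover have "coeff (markov_P_seq (Suc (Suc k))) (Suc (Suc k)) = bivar_u ^ Suc (Suc k)"
    using 3 by (simp add: coeff_markov_P_seq_Suc_Suc algebra_simps)
  ultimately show ?case
    by blast
qed

fun subleading_cofactor :: "nat \<Rightarrow> int poly poly" where
  "subleading_cofactor 0 = 0"
| "subleading_cofactor (Suc 0) = 1"
| "subleading_cofactor (Suc (Suc k)) =
     (bivar_u + bivar_v) * subleading_cofactor (Suc k) - bivar_u * bivar_v * subleading_cofactor k
     + bivar_u ^ Suc k"

lemma coeff_markov_P_seq_subleading:
  "coeff (markov_P_seq (Suc k)) k = (bivar_u + bivar_v)\<^sup>2 * subleading_cofactor (Suc k)"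
proof (induction k rule: subleading_cofactor.induct)
  case 1
  show ?case
    by (simp add: var_u_def var_v_def var_w_def bivar_u_def bivar_v_def power2_eq_square)
next
  case 2
  have "coeff (markov_P_seq (Suc 0)) 0 = (bivar_u + bivar_v)\<^sup>2"
    by (simp add: var_u_def var_v_def var_w_def bivar_u_def bivar_v_def power2_eq_square)
  then show ?case
    using markov_P_seq_leading[of 1]
    by (simp add: coeff_markov_P_seq_Suc_Suc algebra_simps power2_eq_square)
next
  case (3 k)
  have "coeff (markov_P_seq (Suc (Suc (Suc k)))) (Suc (Suc k)) =
      (bivar_u + bivar_v)\<^sup>2 * coeff (markov_P_seq (Suc (Suc k))) (Suc (Suc k))
      + (bivar_u + bivar_v) * coeff (markov_P_seq (Suc (Suc k))) (Suc k)
      - bivar_u * bivar_v * coeff (markov_P_seq (Suc k)) k"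
    by (simp only: coeff_markov_P_seq_Suc_Suc) simp
  also have "\<dots> = (bivar_u + bivar_v)\<^sup>2 * (bivar_u ^ Suc (Suc k)
      + (bivar_u + bivar_v) * subleading_cofactor (Suc (Suc k))
      - bivar_u * bivar_v * subleading_cofactor (Suc k))"
    by (simp only: 3 conjunct2[OF markov_P_seq_leading]) (simp add: algebra_simps)
  finally show ?case
    by simp
qed

definition coeff2 :: "int poly poly \<Rightarrow> nat \<Rightarrow> nat \<Rightarrow> int" where
  "coeff2 p i j = coeff (coeff p j) i"

lemma coeff2_add [simp]: "coeff2 (p + q) i j = coeff2 p i j + coeff2 q i j"
  by (simp add: coeff2_def)

lemma coeff2_diff [simp]: "coeff2 (p - q) i j = coeff2 p i j - coeff2 q i j"
  by (simp add: coeff2_def)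

lemma coeff2_bivar_u_mult [simp]:
  "coeff2 (bivar_u * p) i j = (if i = 0 then 0 else coeff2 p (i - 1) j)"
  by (cases i) (simp_all add: coeff2_def bivar_u_def coeff_pCons)

lemma coeff2_bivar_v_mult [simp]:
  "coeff2 (bivar_v * p) i j = (if j = 0 then 0 else coeff2 p i (j - 1))"
  by (cases j) (simp_all add: coeff2_def bivar_v_def coeff_pCons)

lemma coeff2_bivar_u_power [simp]:
  "coeff2 (bivar_u ^ n) i j = (if i = n \<and> j = 0 then 1 else 0)"
proof -
  have "bivar_u ^ n = [:monom 1 n:]"
    by (induction n) (simp_all add: bivar_u_def monom_Suc algebra_simps one_pCons)
  then show ?thesis
    by (simp add: coeff2_def coeff_pCons split: nat.splits)
qed

lemma coeff2_subleading_cofactor: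
  "coeff2 (subleading_cofactor k) i j = (if i + j + 1 = k then int (i + 1) else 0)"
proof (induction k arbitrary: i j rule: subleading_cofactor.induct)
  case 1
  show ?case by (simp add: coeff2_def)
next
  case 2
  show ?case by (simp add: coeff2_def coeff_1)
next
  case (3 k)
  have recurrence: "subleading_cofactor (Suc (Suc k)) =
      bivar_u * subleading_cofactor (Suc k) + bivar_v * subleading_cofactor (Suc k)
      - bivar_u * (bivar_v * subleading_cofactor k) + bivar_u ^ Suc k"
    by (simp add: algebra_simps)
  show ?case
    unfolding recurrence by (simp add: 3) presburger
qed

lemma coeff3_markov_P_seq:
  assumes "0 < m" "m < n"
  shows "coeff3 (markov_P_seq n) m (n + 1 - m) (n - 1) = 4 * int m"
proof -
  obtain k where n: "n = Suc k"
    using assms by (cases n) auto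
  have "coeff3 (markov_P_seq n) m (n + 1 - m) (n - 1) =
      coeff2 ((bivar_u + bivar_v)\<^sup>2 * subleading_cofactor n) m (n + 1 - m)"
    by (simp add: coeff3_def coeff2_def n coeff_markov_P_seq_subleading)
  also have "(bivar_u + bivar_v)\<^sup>2 * subleading_cofactor n =
      bivar_u * (bivar_u * subleading_cofactor n) + bivar_u * (bivar_v * subleading_cofactor n)
      + bivar_u * (bivar_v * subleading_cofactor n) + bivar_v * (bivar_v * subleading_cofactor n)"
    by (simp add: algebra_simps power2_eq_square)
  also have "coeff2 \<dots> m (n + 1 - m) = 4 * int m"
    using assms
    by (simp only: coeff2_add coeff2_bivar_u_mult coeff2_bivar_v_mult coeff2_subleading_cofactor)
      auto
  finally show ?thesis .
qed

definition markov_M_one :: ratfun3 where "markov_M_one = (varx\<^sup>2 + vary\<^sup>2) / varz"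

fun markov_M_seq :: "nat \<Rightarrow> ratfun3" where
  "markov_M_seq 0 = varx"
| "markov_M_seq (Suc 0) = (varx\<^sup>2 + markov_M_one\<^sup>2) / vary"
| "markov_M_seq (Suc (Suc k)) = (markov_M_one\<^sup>2 + (markov_M_seq (Suc k))\<^sup>2) / markov_M_seq k"

lemma markov_rel_inf_unique: "markov_rel (1, 0) M \<Longrightarrow> M = vary"
  by (erule markov_rel.cases) auto

lemma markov_rel_one_unique:
  assumes "markov_rel (1, 1) M"
  shows "M = markov_M_one"
  using assms
proof cases
  case (step a b A c d C B)
  then have "c = 0" "d = 0"
    by linarith+
  with step show ?thesis
    by simp
qed (simp_all add: markov_M_one_def)

lemma markov_step_indices_k_Suc_k:
  fixes a b c d k :: nat
  assumes "a + 2 * c = k" "b + 2 * d = k + 1" "\<bar>int a * int d - int b * int c\<bar> = 1"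
  shows "k = 1 \<and> a = 1 \<and> b = 0 \<and> c = 0 \<and> d = 1
    \<or> 2 \<le> k \<and> a = k - 2 \<and> b = k - 1 \<and> c = 1 \<and> d = 1"
proof -
  consider "k = 0" | "k = 1" | "k \<ge> 2"
    by linarith
  then show ?thesis
  proof cases
    case 1
    with assms show ?thesis by simp
  next
    case 2
    have "a = 1" "c = 0"
      using 2 assms(1) by presburger+
    with 2 assms show ?thesis
      by auto
  next
    case k: 3
    define t where "t = int d - int c"
    have a: "int a = int k - 2 * int c" and b: "int b = int k + 1 - 2 * int d"
      using assms(1,2) by linarith+
    have "int a * int d - int b * int c = int k * t - int c"
      unfolding a b t_def by (simp add: algebra_simps)
    then have det: "int k * t - int c = 1 \<or> int k * t - int c = -1"
      using assms(3) by linarith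
    have "t = 0"
    proof (rule ccontr)
      assume "t \<noteq> 0"
      then consider "t \<ge> 1" | "t \<le> -1"
        by linarith
      then show False
      proof cases
        case 1
        then have "int k * t \<ge> int k * 1"
          by (intro mult_left_mono) auto
        then show False
          using 1 assms(1,2) det k unfolding t_def by linarith
      next
        case 2
        then have "int k * t \<le> int k * (-1)"
          by (intro mult_left_mono) auto
        then show False
          using assms(1,2) det k by linarith
      qed
    qed
    with assms det k show ?thesis
      unfolding t_def by auto
  qed
qed

lemma markov_rel_k_Suc_k_unique: "markov_rel (k, Suc k) M \<Longrightarrow> M = markov_M_seq k"
proof (induction k arbitrary: M rule: less_induct)
  case (less k)
  from less.prems show ?case
  proof cases
    case (step a b A c d C B)
    then have "k = 1 \<and> a = 1 \<and> b = 0 \<and> c = 0 \<and> d = 1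
      \<or> 2 \<le> k \<and> a = k - 2 \<and> b = k - 1 \<and> c = 1 \<and> d = 1"
      by (intro markov_step_indices_k_Suc_k) auto
    then show ?thesis
    proof
      assume "k = 1 \<and> a = 1 \<and> b = 0 \<and> c = 0 \<and> d = 1"
      with step less.IH[of 0 C] markov_rel_inf_unique[of A] markov_rel_one_unique[of B]
      show ?thesis
        by simp
    next
      assume "2 \<le> k \<and> a = k - 2 \<and> b = k - 1 \<and> c = 1 \<and> d = 1"
      moreover from this obtain j where "k = Suc (Suc j)"
        using add_2_eq_Suc le_Suc_ex by blast
      ultimately show ?thesis
        using step less.IH[of j A] less.IH[of "Suc j" B] markov_rel_one_unique[of C]
        by auto
    qed
  qed auto
qed

lemma markov_rel_markov_M_seq: "markov_rel (k, Suc k) (markov_M_seq k)"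
proof (induction k rule: markov_M_seq.induct)
  case 1
  show ?case
    using markov_rel.zero by simp
next
  case 2
  have "markov_rel (1 + 2 * 0, 0 + 2 * 1) ((varx\<^sup>2 + markov_M_one\<^sup>2) / vary)"
    using markov_rel.one by (intro markov_rel.step[OF markov_rel.inf markov_rel.zero])
      (simp_all add: markov_M_one_def)
  then show ?case
    by simp
next
  case (3 k)
  have "markov_rel (k + 2 * 1, Suc k + 2 * 1)
      ((markov_M_one\<^sup>2 + (markov_M_seq (Suc k))\<^sup>2) / markov_M_seq k)"
    using markov_rel.one 3 by (intro markov_rel.step[OF 3(2)]) (simp_all add: markov_M_one_def)
  then show ?case
    by simp
qed

lemma markov_M_k_Suc_k: "markov_M k (Suc k) = markov_M_seq k"
  unfolding markov_M_def
  using markov_rel_k_Suc_k_unique markov_rel_markov_M_seq by (intro the_equality) auto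

lemma linear_recurrence_det_invariant:
  fixes g :: "nat \<Rightarrow> 'a::comm_ring_1"
  assumes rec: "\<And>k. g (Suc (Suc k)) = t * g (Suc k) - g k"
  shows "g (Suc (Suc k)) * g k - (g (Suc k))\<^sup>2 = g 2 * g 0 - (g 1)\<^sup>2"
proof (induction k)
  case 0
  show ?case by (simp add: numeral_2_eq_2)
next
  case (Suc k)
  have "g (Suc (Suc (Suc k))) * g (Suc k) - (g (Suc (Suc k)))\<^sup>2
      = g (Suc (Suc k)) * (t * g (Suc k) - g (Suc (Suc k))) - (g (Suc k))\<^sup>2"
    unfolding rec[of "Suc k"] by (simp add: algebra_simps power2_eq_square)
  also have "t * g (Suc k) - g (Suc (Suc k)) = g k"
    by (simp add: rec)
  finally show ?case
    using Suc by simp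
qed

lemma nonlinear_recurrence_of_linear:
  fixes g :: "nat \<Rightarrow> 'a::field"
  assumes rec: "\<And>k. g (Suc (Suc k)) = t * g (Suc k) - g k" and nonzero: "\<And>k. g k \<noteq> 0"
  shows "g (Suc (Suc k)) = (g 2 * g 0 - (g 1)\<^sup>2 + (g (Suc k))\<^sup>2) / g k"
  using linear_recurrence_det_invariant[of g t, OF rec, of k, symmetric] nonzero[of k]
  by (simp add: field_simps)

lemma markov_P_seq_nonzero: "markov_P_seq k \<noteq> 0"
proof
  assume "markov_P_seq k = 0"
  then show False
    using markov_P_seq_leading[of k] by (simp add: bivar_u_def)
qed

lemma eval3_markov_P_seq_nonzero: "eval3 (markov_P_seq k) (varx\<^sup>2) (vary\<^sup>2) (varz\<^sup>2) \<noteq> 0"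
proof
  assume "eval3 (markov_P_seq k) (varx\<^sup>2) (vary\<^sup>2) (varz\<^sup>2) = 0"
  then have "markov_P_seq k = 0"
    using comm_ring_hom.hom_zero[OF comm_ring_hom_eval3] by (intro eval3_squares_inj) simp
  with markov_P_seq_nonzero show False ..
qed

definition markov_M_closed :: "nat \<Rightarrow> ratfun3" where
  "markov_M_closed k =
     varx * eval3 (markov_P_seq k) (varx\<^sup>2) (vary\<^sup>2) (varz\<^sup>2) / (varx * vary * varz\<^sup>2) ^ k"

lemma markov_M_closed_rec:
  "markov_M_closed (Suc (Suc k)) =
     (varx\<^sup>2 + vary\<^sup>2) * (varz\<^sup>2 + varx\<^sup>2 + vary\<^sup>2) / (varx * vary * varz\<^sup>2)
       * markov_M_closed (Suc k)
     - markov_M_closed k"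
proof -
  interpret eval: comm_ring_hom "\<lambda>P. eval3 P (varx\<^sup>2) (vary\<^sup>2) (varz\<^sup>2)"
    by (rule comm_ring_hom_eval3)
  define D where "D = varx * vary * varz\<^sup>2"
  define E where "E k = eval3 (markov_P_seq k) (varx\<^sup>2) (vary\<^sup>2) (varz\<^sup>2)" for k
  have "D \<noteq> 0"
    using vars_nonzero by (simp add: D_def)
  have E_rec: "E (Suc (Suc k)) =
      (varx\<^sup>2 + vary\<^sup>2) * (varz\<^sup>2 + varx\<^sup>2 + vary\<^sup>2) * E (Suc k) - D\<^sup>2 * E k"
    by (simp add: E_def D_def markov_P_seq.simps(3) power_mult_distrib)
  show ?thesis
    unfolding markov_M_closed_def D_def[symmetric] E_def[symmetric] E_rec
    using \<open>D \<noteq> 0\<close> by (simp add: field_simps power2_eq_square)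
qed

lemma markov_M_closed_0: "markov_M_closed 0 = varx"
  by (simp add: markov_M_closed_def comm_ring_hom.hom_one[OF comm_ring_hom_eval3])

lemma markov_M_closed_Suc_0:
  "markov_M_closed (Suc 0) =
     varx * (varx\<^sup>2 * varz\<^sup>2 + (varx\<^sup>2 + vary\<^sup>2)\<^sup>2) / (varx * vary * varz\<^sup>2)"
proof -
  interpret eval: comm_ring_hom "\<lambda>P. eval3 P (varx\<^sup>2) (vary\<^sup>2) (varz\<^sup>2)"
    by (rule comm_ring_hom_eval3)
  show ?thesis
    by (simp add: markov_M_closed_def)
qed

lemma markov_M_closed_nonzero: "markov_M_closed k \<noteq> 0"
  using vars_nonzero eval3_markov_P_seq_nonzero by (simp add: markov_M_closed_def)

lemma markov_M_closed_det:
  "markov_M_closed 2 * markov_M_closed 0 - (markov_M_closed 1)\<^sup>2 = markov_M_one\<^sup>2"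
  using vars_nonzero markov_M_closed_rec[of 0]
  by (simp add: numeral_2_eq_2 markov_M_closed_0 markov_M_closed_Suc_0 markov_M_one_def
      field_simps power2_eq_square)

lemma markov_M_seq_eq_markov_M_closed: "markov_M_seq k = markov_M_closed k"
proof (induction k rule: markov_M_seq.induct)
  case 1
  show ?case by (simp add: markov_M_closed_0)
next
  case 2
  show ?case
    using vars_nonzero
    by (simp add: markov_M_closed_Suc_0 markov_M_one_def field_simps power2_eq_square)
next
  case (3 k)
  then show ?case
    using nonlinear_recurrence_of_linear[of markov_M_closed, OF markov_M_closed_rec
        markov_M_closed_nonzero, of k] markov_M_closed_det
    by simp
qed

lemma markov_P_eq_markov_P_seq:
  assumes "n \<ge> 1"
  shows "markov_P n (n + 1) = markov_P_seq n"
proof -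
  define den where "den = varx ^ (n - 1) * vary ^ (n + 1 - 1) * varz ^ (n + (n + 1) - 1)"
  have "den \<noteq> 0"
    using vars_nonzero by (simp add: den_def)
  have "(varx * vary * varz\<^sup>2) ^ n = varx * den"
    using assms unfolding den_def
    by (cases n) (simp_all add: power_mult_distrib power_mult[symmetric] mult_2_right power_add
        power2_eq_square algebra_simps)
  then have M: "markov_M n (n + 1) = eval3 (markov_P_seq n) (varx\<^sup>2) (vary\<^sup>2) (varz\<^sup>2) / den"
    using vars_nonzero
    by (simp add: markov_M_k_Suc_k markov_M_seq_eq_markov_M_closed markov_M_closed_def)
  show ?thesis
    unfolding markov_P_def den_def[symmetric]
  proof (rule the_equality)
    show "homogeneous3 (n + (n + 1) - 1) (markov_P_seq n) \<and>
        markov_M n (n + 1) = eval3 (markov_P_seq n) (varx\<^sup>2) (vary\<^sup>2) (varz\<^sup>2) / den"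
      using homogeneous3_markov_P_seq[of n] M by (simp add: mult_2)
  next
    fix P
    assume "homogeneous3 (n + (n + 1) - 1) P \<and>
        markov_M n (n + 1) = eval3 P (varx\<^sup>2) (vary\<^sup>2) (varz\<^sup>2) / den"
    with M \<open>den \<noteq> 0\<close> show "P = markov_P_seq n"
      by (intro eval3_squares_inj) simp
  qed
qed

theorem theorem9p2:
  fixes n m :: nat
  assumes "n \<ge> 2" and "1 \<le> m" and "m \<le> n - 1"
  shows "coeff3 (markov_P n (n + 1)) m (n + 1 - m) (n - 1) = 4 * int m"
  using assms markov_P_eq_markov_P_seq[of n] coeff3_markov_P_seq[of m n] by simp

end
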